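(* Let $\Omega\subset\mathbb{R}^d$, $d\le3$, be a bounded polytopal domain with Lipschitz boundary, $\psi\in W^{2,\infty}(\Omega)$ with $\Delta\psi\le0$, $\tau>0$, $N\in\mathbb{N}$, and $u^0:=u_0\in L^\infty(\Omega)$, $u_0\ge0$. For $n=1,\dots,N$ let $u^n\in H^1_0(\Omega)$ satisfy \[ (u^n,v)+\tau\Big(\int_\Omega\nabla u^n\cdot\nabla v\,\mathrm{d}x+\int_\Omega u^n\nabla\psi\cdot\nabla v\,\mathrm{d}x\Big)=(u^{n-1},v)\qquad\forall v\in H^1_0(\Omega). \] Then for $n=1,\dots,N$, \[ \tfrac12\|u^n\|_{L^2(\Omega)}^2\le\tfrac12\|u^{n-1}\|_{L^2(\Omega)}^2-\tau\|\nabla u^n\|_{L^2(\Omega)}^2. \]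
   Context: $(\cdot,\cdot)$ is the $L^2(\Omega)$ inner product. *)

theory Defs
  imports "HOL-Analysis.Analysis"
begin

definition partial :: "(real^'d \<Rightarrow> real) \<Rightarrow> 'd \<Rightarrow> real^'d \<Rightarrow> real" where
  "partial f i x = frechet_derivative f (at x) (axis i 1)"

definition grad :: "(real^'d \<Rightarrow> real) \<Rightarrow> real^'d \<Rightarrow> real^'d" where
  "grad f x = (\<chi> i. partial f i x)"

primrec Ck :: "nat \<Rightarrow> (real^'d \<Rightarrow> real) \<Rightarrow> bool" where
  "Ck 0 f = continuous_on UNIV f"
| "Ck (Suc k) f = ((\<forall>x. f differentiable (at x)) \<and> (\<forall>i. Ck k (partial f i)))"

definition smooth :: "(real^'d \<Rightarrow> real) \<Rightarrow> bool" where
  "smooth f \<longleftrightarrow> (\<forall>k. Ck k f)"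

definition test_fun :: "(real^'d) set \<Rightarrow> (real^'d \<Rightarrow> real) \<Rightarrow> bool" where
  "test_fun \<Omega> \<phi> \<longleftrightarrow> smooth \<phi> \<and> compact (closure {x. \<phi> x \<noteq> 0})
       \<and> closure {x. \<phi> x \<noteq> 0} \<subseteq> \<Omega>"

definition loc_int :: "(real^'d) set \<Rightarrow> (real^'d \<Rightarrow> real) \<Rightarrow> bool" where
  "loc_int \<Omega> f \<longleftrightarrow> (\<forall>K. compact K \<and> K \<subseteq> \<Omega> \<longrightarrow> set_integrable lborel K f)"

definition L2 :: "(real^'d) set \<Rightarrow> (real^'d \<Rightarrow> real) \<Rightarrow> bool" where
  "L2 \<Omega> f \<longleftrightarrow> set_borel_measurable lborel \<Omega> f \<and> set_integrable lborel \<Omega> (\<lambda>x. (f x)\<^sup>2)"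

definition L2_vec :: "(real^'d) set \<Rightarrow> (real^'d \<Rightarrow> real^'d) \<Rightarrow> bool" where
  "L2_vec \<Omega> G \<longleftrightarrow> (\<forall>i. L2 \<Omega> (\<lambda>x. G x $ i))"

definition L2norm :: "(real^'d) set \<Rightarrow> (real^'d \<Rightarrow> real) \<Rightarrow> real" where
  "L2norm \<Omega> f = sqrt (LINT x:\<Omega>|lborel. (f x)\<^sup>2)"

definition L2norm_vec :: "(real^'d) set \<Rightarrow> (real^'d \<Rightarrow> real^'d) \<Rightarrow> real" where
  "L2norm_vec \<Omega> G = sqrt (LINT x:\<Omega>|lborel. (norm (G x))\<^sup>2)"

definition Linfty :: "(real^'d) set \<Rightarrow> (real^'d \<Rightarrow> real) \<Rightarrow> bool" where
  "Linfty \<Omega> f \<longleftrightarrow> set_borel_measurable lborel \<Omega> f \<and>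
     (\<exists>C. AE x in lborel. x \<in> \<Omega> \<longrightarrow> \<bar>f x\<bar> \<le> C)"

definition weak_partial :: "(real^'d) set \<Rightarrow> (real^'d \<Rightarrow> real) \<Rightarrow> 'd \<Rightarrow> (real^'d \<Rightarrow> real) \<Rightarrow> bool" where
  "weak_partial \<Omega> u i g \<longleftrightarrow> loc_int \<Omega> u \<and> loc_int \<Omega> g \<and>
     (\<forall>\<phi>. test_fun \<Omega> \<phi> \<longrightarrow>
        (LINT x:\<Omega>|lborel. u x * partial \<phi> i x) = - (LINT x:\<Omega>|lborel. g x * \<phi> x))"

definition weak_grad :: "(real^'d) set \<Rightarrow> (real^'d \<Rightarrow> real) \<Rightarrow> (real^'d \<Rightarrow> real^'d) \<Rightarrow> bool" where
  "weak_grad \<Omega> u G \<longleftrightarrow> (\<forall>i. weak_partial \<Omega> u i (\<lambda>x. G x $ i))"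

definition H1 :: "(real^'d) set \<Rightarrow> (real^'d \<Rightarrow> real) \<Rightarrow> (real^'d \<Rightarrow> real^'d) \<Rightarrow> bool" where
  "H1 \<Omega> u G \<longleftrightarrow> L2 \<Omega> u \<and> weak_grad \<Omega> u G \<and> L2_vec \<Omega> G"

definition H10 :: "(real^'d) set \<Rightarrow> (real^'d \<Rightarrow> real) \<Rightarrow> (real^'d \<Rightarrow> real^'d) \<Rightarrow> bool" where
  "H10 \<Omega> u G \<longleftrightarrow> H1 \<Omega> u G \<and>
     (\<exists>\<phi>::nat \<Rightarrow> real^'d \<Rightarrow> real. (\<forall>k. test_fun \<Omega> (\<phi> k)) \<and>
        (\<lambda>k. L2norm \<Omega> (\<lambda>x. \<phi> k x - u x)) \<longlonglongrightarrow> 0 \<and>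
        (\<lambda>k. L2norm_vec \<Omega> (\<lambda>x. grad (\<phi> k) x - G x)) \<longlonglongrightarrow> 0)"

definition W2inf :: "(real^'d) set \<Rightarrow> (real^'d \<Rightarrow> real) \<Rightarrow> (real^'d \<Rightarrow> real^'d)
    \<Rightarrow> (real^'d \<Rightarrow> real^'d^'d) \<Rightarrow> bool" where
  "W2inf \<Omega> \<psi> G Hs \<longleftrightarrow> Linfty \<Omega> \<psi> \<and> weak_grad \<Omega> \<psi> G \<and> (\<forall>i. Linfty \<Omega> (\<lambda>x. G x $ i)) \<and>
     (\<forall>i j. weak_partial \<Omega> (\<lambda>x. G x $ i) j (\<lambda>x. Hs x $ i $ j) \<and> Linfty \<Omega> (\<lambda>x. Hs x $ i $ j))"

text \<open>Lipschitz boundary: near every boundary point, Omega is (in some direction e)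
  the subgraph of a Lipschitz function of the coordinates orthogonal to e.\<close>
definition lipschitz_boundary :: "(real^'d) set \<Rightarrow> bool" where
  "lipschitz_boundary \<Omega> \<longleftrightarrow> (\<forall>x\<in>frontier \<Omega>. \<exists>r>0. \<exists>e. norm e = 1 \<and>
     (\<exists>h::real^'d \<Rightarrow> real. \<exists>L. L-lipschitz_on {y. y \<bullet> e = 0} h \<and>
        \<Omega> \<inter> ball x r = {y \<in> ball x r. y \<bullet> e < h (y - (y \<bullet> e) *\<^sub>R e)}))"

definition bounded_polytopal_domain :: "(real^'d) set \<Rightarrow> bool" where
  "bounded_polytopal_domain \<Omega> \<longleftrightarrow> open \<Omega> \<and> connected \<Omega> \<and> \<Omega> \<noteq> {} \<and> bounded \<Omega> \<and>
     (\<exists>P. finite P \<and> (\<forall>p\<in>P. polytope p) \<and> closure \<Omega> = \<Union>P)"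

end

theory Submission
  imports Defs
begin

(* Testing the scheme with v = u^n and bounding (u^(n-1), u^n) by the mean of the squared norms
   gives the estimate up to the drift term tau (u^n, grad psi . grad u^n), so everything rests on
   its sign. For a test function phi, phi grad psi . grad phi = 1/2 grad psi . grad (phi^2), and
   the weak second derivatives of psi turn its integral into -1/2 (Laplace psi, phi^2) >= 0.
   Functions in H^1_0 are H^1-limits of test functions, along which the drift form converges
   because grad psi is essentially bounded. *)

section \<open>Square-integrable functions\<close>

definition square_integrable :: "'a measure \<Rightarrow> ('a \<Rightarrow> real) \<Rightarrow> bool" where
  "square_integrable M f \<longleftrightarrow> f \<in> borel_measurable M \<and> integrable M (\<lambda>x. (f x)\<^sup>2)"

definition L2_seminorm :: "'a measure \<Rightarrow> ('a \<Rightarrow> real) \<Rightarrow> real" where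
  "L2_seminorm M f = sqrt (\<integral>x. (f x)\<^sup>2 \<partial>M)"

lemma L2_seminorm_nonneg: "0 \<le> L2_seminorm M f"
  unfolding L2_seminorm_def by simp

lemma L2_seminorm_squared: "(L2_seminorm M f)\<^sup>2 = (\<integral>x. (f x)\<^sup>2 \<partial>M)"
  unfolding L2_seminorm_def by (simp add: integral_nonneg_AE)

lemma square_integrable_imp_integrable_mult:
  assumes "square_integrable M f" "square_integrable M g"
  shows "integrable M (\<lambda>x. f x * g x)"
proof (rule Bochner_Integration.integrable_bound)
  show "integrable M (\<lambda>x. (f x)\<^sup>2 + (g x)\<^sup>2)"
    using assms unfolding square_integrable_def by simp
  show "(\<lambda>x. f x * g x) \<in> borel_measurable M"
    using assms unfolding square_integrable_def by (simp add: borel_measurable_times)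
  have "\<bar>f x * g x\<bar> \<le> (f x)\<^sup>2 + (g x)\<^sup>2" for x
    using sum_squares_bound[of "\<bar>f x\<bar>" "\<bar>g x\<bar>"] abs_ge_zero[of "f x * g x"]
    unfolding abs_mult power2_abs by linarith
  then show "AE x in M. norm (f x * g x) \<le> norm ((f x)\<^sup>2 + (g x)\<^sup>2)"
    by simp
qed

lemma square_integrable_diff:
  assumes "square_integrable M f" "square_integrable M g"
  shows "square_integrable M (\<lambda>x. f x - g x)"
proof -
  have "(\<lambda>x. (f x - g x)\<^sup>2) = (\<lambda>x. (f x)\<^sup>2 - 2 * (f x * g x) + (g x)\<^sup>2)"
    by (simp add: fun_eq_iff power2_diff)
  then show ?thesis
    using assms square_integrable_imp_integrable_mult[OF assms]
    unfolding square_integrable_def by auto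
qed

lemma abs_integral_mult_le_L2_seminorm:
  assumes "square_integrable M f" "square_integrable M g"
  shows "\<bar>\<integral>x. f x * g x \<partial>M\<bar> \<le> L2_seminorm M f * L2_seminorm M g"
proof -
  have [measurable]: "f \<in> borel_measurable M" "g \<in> borel_measurable M"
    and fi: "integrable M (\<lambda>x. (f x)\<^sup>2)" and gi: "integrable M (\<lambda>x. (g x)\<^sup>2)"
    using assms unfolding square_integrable_def by auto
  have fgi: "integrable M (\<lambda>x. \<bar>f x * g x\<bar>)"
    using square_integrable_imp_integrable_mult[OF assms] by simp
  have nn: "(\<integral>\<^sup>+x. ennreal (h x) \<partial>M) = ennreal (\<integral>x. h x \<partial>M)"
    if "integrable M h" "\<And>x. 0 \<le> h x" for h
    using that by (intro nn_integral_eq_integral) auto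
  have "(\<integral>\<^sup>+x. ennreal \<bar>f x\<bar> * ennreal \<bar>g x\<bar> \<partial>M)\<^sup>2
      \<le> (\<integral>\<^sup>+x. ennreal \<bar>f x\<bar> ^ 2 \<partial>M) * (\<integral>\<^sup>+x. ennreal \<bar>g x\<bar> ^ 2 \<partial>M)"
    by (rule Cauchy_Schwarz_nn_integral) auto
  also have "(\<lambda>x. ennreal \<bar>f x\<bar> * ennreal \<bar>g x\<bar>) = (\<lambda>x. ennreal \<bar>f x * g x\<bar>)"
    by (simp add: abs_mult ennreal_mult)
  also have "(\<lambda>x. ennreal \<bar>f x\<bar> ^ 2) = (\<lambda>x. ennreal ((f x)\<^sup>2))"
    by (simp add: ennreal_power)
  also have "(\<lambda>x. ennreal \<bar>g x\<bar> ^ 2) = (\<lambda>x. ennreal ((g x)\<^sup>2))"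
    by (simp add: ennreal_power)
  finally have "ennreal ((\<integral>x. \<bar>f x * g x\<bar> \<partial>M)\<^sup>2)
      \<le> ennreal ((\<integral>x. (f x)\<^sup>2 \<partial>M) * (\<integral>x. (g x)\<^sup>2 \<partial>M))"
    by (simp add: nn fi gi fgi integral_nonneg_AE ennreal_power ennreal_mult)
  then have "(\<integral>x. \<bar>f x * g x\<bar> \<partial>M)\<^sup>2 \<le> (L2_seminorm M f * L2_seminorm M g)\<^sup>2"
    by (simp add: power_mult_distrib L2_seminorm_squared integral_nonneg_AE)
  then have "(\<integral>x. \<bar>f x * g x\<bar> \<partial>M) \<le> L2_seminorm M f * L2_seminorm M g"
    by (simp add: L2_seminorm_nonneg power2_le_iff_abs_le)
  then show ?thesis
    using integral_abs_bound[of M "\<lambda>x. f x * g x"] by linarith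
qed

lemma L2_seminorm_component_le:
  fixes F :: "'a \<Rightarrow> real^'n"
  assumes "\<And>j. square_integrable M (\<lambda>x. F x $ j)"
  shows "L2_seminorm M (\<lambda>x. F x $ i) \<le> sqrt (\<integral>x. (norm (F x))\<^sup>2 \<partial>M)"
proof -
  have norm_sq: "(norm (F x))\<^sup>2 = (\<Sum>j\<in>UNIV. (F x $ j)\<^sup>2)" for x
    unfolding power2_norm_eq_inner inner_vec_def by (simp add: power2_eq_square)
  have "(\<integral>x. (F x $ i)\<^sup>2 \<partial>M) \<le> (\<integral>x. (\<Sum>j\<in>UNIV. (F x $ j)\<^sup>2) \<partial>M)"
    using assms unfolding square_integrable_def
    by (intro integral_mono Bochner_Integration.integrable_sum member_le_sum) auto
  then show ?thesis
    unfolding L2_seminorm_def norm_sq by (rule real_sqrt_le_mono)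
qed

definition ae_bounded :: "'a measure \<Rightarrow> ('a \<Rightarrow> real) \<Rightarrow> bool" where
  "ae_bounded M f \<longleftrightarrow> (\<exists>C. AE x in M. \<bar>f x\<bar> \<le> C)"

lemma ae_bounded_mult:
  assumes "ae_bounded M f" "ae_bounded M g"
  shows "ae_bounded M (\<lambda>x. f x * g x)"
proof -
  obtain C D where "AE x in M. \<bar>f x\<bar> \<le> C" "AE x in M. \<bar>g x\<bar> \<le> D"
    using assms unfolding ae_bounded_def by blast
  then have "AE x in M. \<bar>f x * g x\<bar> \<le> C * D"
    by eventually_elim (auto simp: abs_mult intro: mult_mono)
  then show ?thesis unfolding ae_bounded_def by blast
qed

lemma (in finite_measure) integrable_ae_bounded:
  assumes "f \<in> borel_measurable M" "ae_bounded M f"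
  shows "integrable M f"
proof -
  obtain C where C: "AE x in M. \<bar>f x\<bar> \<le> C"
    using assms(2) unfolding ae_bounded_def by blast
  show ?thesis
  proof (rule Bochner_Integration.integrable_bound)
    show "integrable M (\<lambda>_. C)" by simp
    show "AE x in M. norm (f x) \<le> norm C"
      using C by eventually_elim auto
  qed fact
qed

lemma (in finite_measure) square_integrable_ae_bounded:
  assumes "f \<in> borel_measurable M" "ae_bounded M f"
  shows "square_integrable M f"
  unfolding square_integrable_def power2_eq_square
  using assms ae_bounded_mult[OF assms(2,2)]
  by (simp add: integrable_ae_bounded borel_measurable_times)

lemma square_integrable_bounded_mult:
  assumes g: "square_integrable M g" and [measurable]: "c \<in> borel_measurable M"
    and c: "AE x in M. \<bar>c x\<bar> \<le> C"
  shows "square_integrable M (\<lambda>x. c x * g x)"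
    and "L2_seminorm M (\<lambda>x. c x * g x) \<le> \<bar>C\<bar> * L2_seminorm M g"
proof -
  have [measurable]: "g \<in> borel_measurable M" and gi: "integrable M (\<lambda>x. (g x)\<^sup>2)"
    using g unfolding square_integrable_def by auto
  have le: "AE x in M. (c x * g x)\<^sup>2 \<le> C\<^sup>2 * (g x)\<^sup>2"
    using c
  proof eventually_elim
    case (elim x)
    then have "(c x)\<^sup>2 \<le> C\<^sup>2" using abs_le_square_iff[of "c x" C] by simp
    then show ?case by (simp add: power_mult_distrib mult_right_mono)
  qed
  have Cgi: "integrable M (\<lambda>x. C\<^sup>2 * (g x)\<^sup>2)" using gi by simp
  have cgi: "integrable M (\<lambda>x. (c x * g x)\<^sup>2)"
    by (rule Bochner_Integration.integrable_bound[OF Cgi]) (use le in auto)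
  then show "square_integrable M (\<lambda>x. c x * g x)"
    unfolding square_integrable_def by simp
  have "(\<integral>x. (c x * g x)\<^sup>2 \<partial>M) \<le> C\<^sup>2 * (\<integral>x. (g x)\<^sup>2 \<partial>M)"
    using integral_mono_AE[OF cgi Cgi le] by simp
  then show "L2_seminorm M (\<lambda>x. c x * g x) \<le> \<bar>C\<bar> * L2_seminorm M g"
    unfolding L2_seminorm_def using real_sqrt_le_mono by (fastforce simp: real_sqrt_mult)
qed

lemma tendsto_integral_weighted_product:
  assumes a: "\<And>k. square_integrable M (a k)" "square_integrable M a0"
    and b: "\<And>k. square_integrable M (b k)" "square_integrable M b0"
    and c_meas: "c \<in> borel_measurable M" and c_bdd: "ae_bounded M c"
    and lim_a: "(\<lambda>k. L2_seminorm M (\<lambda>x. a k x - a0 x)) \<longlonglongrightarrow> 0"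
    and lim_b: "(\<lambda>k. L2_seminorm M (\<lambda>x. b k x - b0 x)) \<longlonglongrightarrow> 0"
  shows "(\<lambda>k. \<integral>x. a k x * (c x * b k x) \<partial>M) \<longlonglongrightarrow> (\<integral>x. a0 x * (c x * b0 x) \<partial>M)"
proof -
  obtain C where c: "AE x in M. \<bar>c x\<bar> \<le> C"
    using c_bdd unfolding ae_bounded_def by blast
  define I where "I f g = (\<integral>x. f x * (c x * g x) \<partial>M)" for f g
  define nrm where "nrm = L2_seminorm M"
  have int: "integrable M (\<lambda>x. f x * (c x * g x))"
    and bound: "\<bar>I f g\<bar> \<le> \<bar>C\<bar> * (nrm f * nrm g)"
    if f: "square_integrable M f" and g: "square_integrable M g" for f g
  proof -
    have cg: "square_integrable M (\<lambda>x. c x * g x)"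
      and cg_le: "nrm (\<lambda>x. c x * g x) \<le> \<bar>C\<bar> * nrm g"
      using square_integrable_bounded_mult[OF g c_meas c] unfolding nrm_def by auto
    show "integrable M (\<lambda>x. f x * (c x * g x))"
      using square_integrable_imp_integrable_mult[OF f cg] .
    have "\<bar>I f g\<bar> \<le> nrm f * nrm (\<lambda>x. c x * g x)"
      unfolding I_def nrm_def by (rule abs_integral_mult_le_L2_seminorm[OF f cg])
    also have "\<dots> \<le> nrm f * (\<bar>C\<bar> * nrm g)"
      using cg_le by (intro mult_left_mono) (simp_all add: nrm_def L2_seminorm_nonneg)
    finally show "\<bar>I f g\<bar> \<le> \<bar>C\<bar> * (nrm f * nrm g)"
      by (simp add: ac_simps)
  qed
  define da where "da k x = a k x - a0 x" for k x
  define db where "db k x = b k x - b0 x" for k x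
  have da: "square_integrable M (da k)" and db: "square_integrable M (db k)" for k
    unfolding da_def db_def using a b by (auto intro: square_integrable_diff)
  have split: "(\<integral>x. a k x * (c x * b k x) \<partial>M) - I a0 b0
      = I (da k) (db k) + I (da k) b0 + I a0 (db k)" for k
  proof -
    have "(\<integral>x. a k x * (c x * b k x) \<partial>M)
      = (\<integral>x. da k x * (c x * db k x) + da k x * (c x * b0 x) + a0 x * (c x * db k x)
             + a0 x * (c x * b0 x) \<partial>M)"
      by (rule Bochner_Integration.integral_cong) (simp_all add: da_def db_def algebra_simps)
    also have "\<dots> = I (da k) (db k) + I (da k) b0 + I a0 (db k) + I a0 b0"
      unfolding I_def using int[OF da db] int[OF da b(2)] int[OF a(2) db] int[OF a(2) b(2)]
      by simp
    finally show ?thesis by simp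
  qed
  define e where "e k = \<bar>C\<bar> * (nrm (da k) * nrm (db k)) + \<bar>C\<bar> * (nrm (da k) * nrm b0)
      + \<bar>C\<bar> * (nrm a0 * nrm (db k))" for k
  have "e \<longlonglongrightarrow> \<bar>C\<bar> * (0 * 0) + \<bar>C\<bar> * (0 * nrm b0) + \<bar>C\<bar> * (nrm a0 * 0)"
    unfolding e_def nrm_def da_def db_def by (intro tendsto_intros lim_a lim_b)
  then have e_lim: "e \<longlonglongrightarrow> 0" by simp
  have bound_e: "norm ((\<integral>x. a k x * (c x * b k x) \<partial>M) - I a0 b0) \<le> e k" for k
  proof -
    have "norm ((\<integral>x. a k x * (c x * b k x) \<partial>M) - I a0 b0)
        \<le> \<bar>I (da k) (db k)\<bar> + \<bar>I (da k) b0\<bar> + \<bar>I a0 (db k)\<bar>"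
      unfolding split real_norm_def by (rule order_trans[OF abs_triangle_ineq]) (simp add: abs_triangle_ineq)
    also have "\<bar>I (da k) (db k)\<bar> + \<bar>I (da k) b0\<bar> + \<bar>I a0 (db k)\<bar> \<le> e k"
      unfolding e_def using a b da db by (intro add_mono bound)
    finally show ?thesis .
  qed
  have "(\<lambda>k. (\<integral>x. a k x * (c x * b k x) \<partial>M) - I a0 b0) \<longlonglongrightarrow> 0"
    by (rule Lim_null_comparison[OF always_eventually[OF allI[OF bound_e]] e_lim])
  then show ?thesis unfolding I_def by (rule LIM_zero_cancel)
qed

section \<open>Smooth functions\<close>

lemma partial_add:
  assumes "f differentiable (at x)" "g differentiable (at x)"
  shows "partial (\<lambda>y. f y + g y) i x = partial f i x + partial g i x"
proof -
  have "((\<lambda>y. f y + g y) has_derivative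
      (\<lambda>h. frechet_derivative f (at x) h + frechet_derivative g (at x) h)) (at x)"
    using assms by (intro has_derivative_add) (simp_all flip: frechet_derivative_works)
  then have "(\<lambda>h. frechet_derivative f (at x) h + frechet_derivative g (at x) h)
      = frechet_derivative (\<lambda>y. f y + g y) (at x)"
    by (rule frechet_derivative_at)
  then show ?thesis
    unfolding partial_def by (metis (no_types, lifting))
qed

lemma partial_mult:
  assumes "f differentiable (at x)" "g differentiable (at x)"
  shows "partial (\<lambda>y. f y * g y) i x = f x * partial g i x + partial f i x * g x"
proof -
  have "((\<lambda>y. f y * g y) has_derivative
      (\<lambda>h. f x * frechet_derivative g (at x) h + frechet_derivative f (at x) h * g x)) (at x)"
    using assms by (intro has_derivative_mult) (simp_all flip: frechet_derivative_works)
  then have "(\<lambda>h. f x * frechet_derivative g (at x) h + frechet_derivative f (at x) h * g x)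
      = frechet_derivative (\<lambda>y. f y * g y) (at x)"
    by (rule frechet_derivative_at)
  then show ?thesis
    unfolding partial_def by (metis (no_types, lifting))
qed

lemma Ck_Suc_imp_Ck: "Ck (Suc k) f \<Longrightarrow> Ck k f"
proof (induction k arbitrary: f)
  case 0
  then show ?case
    by (simp add: differentiable_on_def differentiable_imp_continuous_on)
qed simp

lemma Ck_add: "Ck k f \<Longrightarrow> Ck k g \<Longrightarrow> Ck k (\<lambda>x. f x + g x)"
proof (induction k arbitrary: f g)
  case 0
  then show ?case by (simp add: continuous_on_add)
next
  case (Suc k)
  then have "partial (\<lambda>x. f x + g x) i = (\<lambda>x. partial f i x + partial g i x)" for i
    by (simp add: fun_eq_iff partial_add)
  with Suc show ?case by simp
qed

lemma Ck_mult: "Ck k f \<Longrightarrow> Ck k g \<Longrightarrow> Ck k (\<lambda>x. f x * g x)"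
proof (induction k arbitrary: f g)
  case 0
  then show ?case by (simp add: continuous_on_mult)
next
  case (Suc k)
  then have "partial (\<lambda>x. f x * g x) i = (\<lambda>x. f x * partial g i x + partial f i x * g x)" for i
    by (simp add: fun_eq_iff partial_mult)
  moreover have "Ck k (\<lambda>x. f x * partial g i x + partial f i x * g x)" for i
    using Suc.prems by (intro Ck_add Suc.IH) (simp_all add: Ck_Suc_imp_Ck)
  ultimately show ?case using Suc.prems by simp
qed

lemma smooth_differentiable: "smooth f \<Longrightarrow> f differentiable (at x)"
  unfolding smooth_def by (metis Ck.simps(2))

lemma smooth_continuous: "smooth f \<Longrightarrow> continuous_on UNIV f"
  unfolding smooth_def by (metis Ck.simps(1))

lemma smooth_partial: "smooth f \<Longrightarrow> smooth (partial f i)"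
  unfolding smooth_def by (metis Ck.simps(2))

lemma partial_square:
  assumes "smooth f"
  shows "partial (\<lambda>x. f x * f x) i x = 2 * f x * partial f i x"
  using partial_mult[OF smooth_differentiable[OF assms] smooth_differentiable[OF assms]] by simp

lemma test_fun_square: "test_fun \<Omega> \<phi> \<Longrightarrow> test_fun \<Omega> (\<lambda>x. \<phi> x * \<phi> x)"
  unfolding test_fun_def smooth_def by (simp add: Ck_mult)

lemma set_integral_eq_restrict_space:
  fixes f :: "'a::euclidean_space \<Rightarrow> real"
  assumes "\<Omega> \<in> sets lborel"
  shows "(LINT x:\<Omega>|lborel. f x) = (\<integral>x. f x \<partial>restrict_space lborel \<Omega>)"
  unfolding set_lebesgue_integral_def using assms by (intro integral_restrict_space[symmetric]) simp

lemma L2_iff_square_integrable: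
  "\<Omega> \<in> sets lborel \<Longrightarrow> L2 \<Omega> f \<longleftrightarrow> square_integrable (restrict_space lborel \<Omega>) f"
  unfolding L2_def square_integrable_def set_borel_measurable_def
  by (simp add: borel_measurable_restrict_space_iff set_integrable_eq)

lemma Linfty_iff_ae_bounded:
  "\<Omega> \<in> sets lborel \<Longrightarrow> Linfty \<Omega> f \<longleftrightarrow>
     f \<in> borel_measurable (restrict_space lborel \<Omega>) \<and> ae_bounded (restrict_space lborel \<Omega>) f"
  unfolding Linfty_def ae_bounded_def set_borel_measurable_def
  by (simp add: borel_measurable_restrict_space_iff AE_restrict_space_iff)

lemma L2norm_eq_L2_seminorm:
  "\<Omega> \<in> sets lborel \<Longrightarrow> L2norm \<Omega> f = L2_seminorm (restrict_space lborel \<Omega>) f"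
  unfolding L2norm_def L2_seminorm_def by (simp add: set_integral_eq_restrict_space)

lemma L2norm_squared: "(L2norm \<Omega> f)\<^sup>2 = (LINT x:\<Omega>|lborel. f x * f x)"
  unfolding L2norm_def set_lebesgue_integral_def
  by (simp add: integral_nonneg_AE power2_eq_square)

lemma L2norm_vec_squared: "(L2norm_vec \<Omega> G)\<^sup>2 = (LINT x:\<Omega>|lborel. G x \<bullet> G x)"
  unfolding L2norm_vec_def set_lebesgue_integral_def
  by (simp add: integral_nonneg_AE power2_norm_eq_inner)

lemma L2_seminorm_component_le_L2norm_vec:
  fixes F :: "real^'d \<Rightarrow> real^'d"
  assumes "\<Omega> \<in> sets lborel" "\<And>j. square_integrable (restrict_space lborel \<Omega>) (\<lambda>x. F x $ j)"
  shows "L2_seminorm (restrict_space lborel \<Omega>) (\<lambda>x. F x $ i) \<le> L2norm_vec \<Omega> F"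
  unfolding L2norm_vec_def set_integral_eq_restrict_space[OF assms(1)]
  using assms(2) by (rule L2_seminorm_component_le)

lemma finite_measure_restrict_bounded:
  assumes "\<Omega> \<in> sets lborel" "bounded \<Omega>"
  shows "finite_measure (restrict_space lborel (\<Omega> :: 'a::euclidean_space set))"
  using assms emeasure_bounded_finite[OF assms(2)]
  by (intro finite_measureI) (simp add: space_restrict_space emeasure_restrict_space)

lemma Linfty_imp_L2:
  assumes "\<Omega> \<in> sets lborel" "bounded \<Omega>" "Linfty \<Omega> f"
  shows "L2 \<Omega> f"
proof -
  interpret finite_measure "restrict_space lborel \<Omega>"
    using assms(1,2) by (rule finite_measure_restrict_bounded)
  show ?thesis
    using assms by (simp add: L2_iff_square_integrable Linfty_iff_ae_bounded square_integrable_ae_bounded)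
qed

lemma continuous_ae_bounded_restrict:
  fixes g :: "'a::euclidean_space \<Rightarrow> real"
  assumes "continuous_on UNIV g" "bounded \<Omega>"
  shows "g \<in> borel_measurable (restrict_space lborel \<Omega>)"
    and "ae_bounded (restrict_space lborel \<Omega>) g"
proof -
  show "g \<in> borel_measurable (restrict_space lborel \<Omega>)"
    using assms(1) by (intro measurable_restrict_space1) (simp add: borel_measurable_continuous_onI)
  have "compact (g ` closure \<Omega>)"
    using assms by (intro compact_continuous_image) (auto intro: continuous_on_subset)
  then obtain B where "\<forall>y\<in>g ` closure \<Omega>. \<bar>y\<bar> \<le> B"
    unfolding bounded_iff real_norm_def[symmetric] by (metis compact_imp_bounded bounded_iff)
  then have "AE x in restrict_space lborel \<Omega>. \<bar>g x\<bar> \<le> B"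
    using closure_subset by (intro AE_I2) (auto simp: space_restrict_space)
  then show "ae_bounded (restrict_space lborel \<Omega>) g"
    unfolding ae_bounded_def by blast
qed

lemma set_integral_mult_le_L2norm_squares:
  assumes \<Omega>: "\<Omega> \<in> sets lborel" and "L2 \<Omega> f" "L2 \<Omega> g"
  shows "(LINT x:\<Omega>|lborel. f x * g x) \<le> (1/2) * (L2norm \<Omega> f)\<^sup>2 + (1/2) * (L2norm \<Omega> g)\<^sup>2"
proof -
  define M where "M = restrict_space lborel \<Omega>"
  have f: "square_integrable M f" and g: "square_integrable M g"
    using assms unfolding M_def by (simp_all add: L2_iff_square_integrable)
  then have fi: "integrable M (\<lambda>x. (f x)\<^sup>2)" and gi: "integrable M (\<lambda>x. (g x)\<^sup>2)"
    unfolding square_integrable_def by auto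
  have "(\<integral>x. f x * g x \<partial>M) \<le> (\<integral>x. (1/2) * (f x)\<^sup>2 + (1/2) * (g x)\<^sup>2 \<partial>M)"
  proof (rule integral_mono)
    show "integrable M (\<lambda>x. f x * g x)"
      by (rule square_integrable_imp_integrable_mult[OF f g])
    show "integrable M (\<lambda>x. (1/2) * (f x)\<^sup>2 + (1/2) * (g x)\<^sup>2)"
      using fi gi by simp
    show "f x * g x \<le> (1/2) * (f x)\<^sup>2 + (1/2) * (g x)\<^sup>2" for x
      using sum_squares_bound[of "f x" "g x"] by simp
  qed
  also have "\<dots> = (1/2) * (L2_seminorm M f)\<^sup>2 + (1/2) * (L2_seminorm M g)\<^sup>2"
    using fi gi by (simp add: L2_seminorm_squared)
  finally show ?thesis
    unfolding M_def set_integral_eq_restrict_space[OF \<Omega>] L2norm_eq_L2_seminorm[OF \<Omega>] .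
qed

lemma W2inf_grad_ae_bounded:
  assumes "\<Omega> \<in> sets lborel" "W2inf \<Omega> \<psi> G\<psi> H\<psi>"
  shows "(\<lambda>x. G\<psi> x $ i) \<in> borel_measurable (restrict_space lborel \<Omega>)"
    and "ae_bounded (restrict_space lborel \<Omega>) (\<lambda>x. G\<psi> x $ i)"
  using assms unfolding W2inf_def by (simp_all add: Linfty_iff_ae_bounded)

lemma test_fun_ae_bounded:
  assumes "test_fun \<Omega> \<phi>" "bounded \<Omega>"
  shows "\<phi> \<in> borel_measurable (restrict_space lborel \<Omega>)"
    and "ae_bounded (restrict_space lborel \<Omega>) \<phi>"
    and "partial \<phi> i \<in> borel_measurable (restrict_space lborel \<Omega>)"
    and "ae_bounded (restrict_space lborel \<Omega>) (partial \<phi> i)"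
proof -
  have "smooth \<phi>"
    using assms(1) unfolding test_fun_def by blast
  then show "\<phi> \<in> borel_measurable (restrict_space lborel \<Omega>)"
    and "ae_bounded (restrict_space lborel \<Omega>) \<phi>"
    and "partial \<phi> i \<in> borel_measurable (restrict_space lborel \<Omega>)"
    and "ae_bounded (restrict_space lborel \<Omega>) (partial \<phi> i)"
    using continuous_ae_bounded_restrict[OF smooth_continuous assms(2)] smooth_partial by blast+
qed

section \<open>The drift term\<close>

(* d\<phi> i stands for the i-th partial derivative of \<phi> and db i for the weak i-th derivative
   of b i; weak_div is its defining identity tested against \<phi>^2. *)
lemma integral_drift_nonneg_if_div_nonpos:
  fixes \<phi> :: "'a \<Rightarrow> real" and d\<phi> b db :: "'i::finite \<Rightarrow> 'a \<Rightarrow> real"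
  assumes "finite_measure M"
    and [measurable]: "\<phi> \<in> borel_measurable M" "\<And>i. d\<phi> i \<in> borel_measurable M"
      "\<And>i. b i \<in> borel_measurable M" "\<And>i. db i \<in> borel_measurable M"
    and bdd: "ae_bounded M \<phi>" "\<And>i. ae_bounded M (d\<phi> i)" "\<And>i. ae_bounded M (b i)"
      "\<And>i. ae_bounded M (db i)"
    and weak_div: "\<And>i. (\<integral>x. b i x * (2 * \<phi> x * d\<phi> i x) \<partial>M) = - (\<integral>x. db i x * (\<phi> x * \<phi> x) \<partial>M)"
    and div_nonpos: "AE x in M. (\<Sum>i\<in>UNIV. db i x) \<le> 0"
  shows "0 \<le> (\<integral>x. \<phi> x * (\<Sum>i\<in>UNIV. b i x * d\<phi> i x) \<partial>M)"
proof -
  interpret finite_measure M by fact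
  have int_b: "integrable M (\<lambda>x. \<phi> x * (b i x * d\<phi> i x))"
    and int_db: "integrable M (\<lambda>x. db i x * (\<phi> x * \<phi> x))" for i
    by (rule integrable_ae_bounded, measurable, intro ae_bounded_mult bdd)+
  have half: "(\<integral>x. \<phi> x * (b i x * d\<phi> i x) \<partial>M) = - (1/2) * (\<integral>x. db i x * (\<phi> x * \<phi> x) \<partial>M)" for i
  proof -
    have "(\<integral>x. \<phi> x * (b i x * d\<phi> i x) \<partial>M) = (\<integral>x. (1/2) * (b i x * (2 * \<phi> x * d\<phi> i x)) \<partial>M)"
      by (rule Bochner_Integration.integral_cong) (simp_all add: algebra_simps)
    also have "\<dots> = (1/2) * (\<integral>x. b i x * (2 * \<phi> x * d\<phi> i x) \<partial>M)"
      by (rule integral_mult_right_zero)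
    finally show ?thesis
      using weak_div[of i] by simp
  qed
  have "(\<integral>x. \<phi> x * (\<Sum>i\<in>UNIV. b i x * d\<phi> i x) \<partial>M) = (\<Sum>i\<in>UNIV. \<integral>x. \<phi> x * (b i x * d\<phi> i x) \<partial>M)"
    unfolding sum_distrib_left by (rule Bochner_Integration.integral_sum) (rule int_b)
  also have "\<dots> = - (1/2) * (\<Sum>i\<in>UNIV. \<integral>x. db i x * (\<phi> x * \<phi> x) \<partial>M)"
    by (simp add: half sum_distrib_left)
  also have "(\<Sum>i\<in>UNIV. \<integral>x. db i x * (\<phi> x * \<phi> x) \<partial>M) = (\<integral>x. (\<Sum>i\<in>UNIV. db i x) * (\<phi> x * \<phi> x) \<partial>M)"
    unfolding sum_distrib_right by (rule Bochner_Integration.integral_sum[symmetric]) (rule int_db)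
  finally have eq: "(\<integral>x. \<phi> x * (\<Sum>i\<in>UNIV. b i x * d\<phi> i x) \<partial>M)
      = (1/2) * (\<integral>x. - ((\<Sum>i\<in>UNIV. db i x) * (\<phi> x * \<phi> x)) \<partial>M)"
    by simp
  have "0 \<le> (\<integral>x. - ((\<Sum>i\<in>UNIV. db i x) * (\<phi> x * \<phi> x)) \<partial>M)"
    by (rule integral_nonneg_AE)
      (use div_nonpos in \<open>eventually_elim, simp add: mult_nonpos_nonneg\<close>)
  then show ?thesis
    unfolding eq by simp
qed

lemma integral_drift_nonneg_limit:
  fixes \<phi> :: "nat \<Rightarrow> 'a \<Rightarrow> real" and d\<phi> :: "nat \<Rightarrow> 'i::finite \<Rightarrow> 'a \<Rightarrow> real"
    and w :: "'a \<Rightarrow> real" and G b :: "'i \<Rightarrow> 'a \<Rightarrow> real"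
  assumes \<phi>: "\<And>k. square_integrable M (\<phi> k)" "\<And>k i. square_integrable M (d\<phi> k i)"
    and w: "square_integrable M w" "\<And>i. square_integrable M (G i)"
    and b: "\<And>i. b i \<in> borel_measurable M" "\<And>i. ae_bounded M (b i)"
    and lim_\<phi>: "(\<lambda>k. L2_seminorm M (\<lambda>x. \<phi> k x - w x)) \<longlonglongrightarrow> 0"
    and lim_d\<phi>: "\<And>i. (\<lambda>k. L2_seminorm M (\<lambda>x. d\<phi> k i x - G i x)) \<longlonglongrightarrow> 0"
    and nonneg: "\<And>k. 0 \<le> (\<integral>x. \<phi> k x * (\<Sum>i\<in>UNIV. b i x * d\<phi> k i x) \<partial>M)"
  shows "0 \<le> (\<integral>x. w x * (\<Sum>i\<in>UNIV. b i x * G i x) \<partial>M)"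
proof -
  have int: "integrable M (\<lambda>x. f x * (b i x * g x))"
    if "square_integrable M f" "square_integrable M g" for f g i
  proof -
    obtain C where C: "AE x in M. \<bar>b i x\<bar> \<le> C"
      using b(2) unfolding ae_bounded_def by blast
    show ?thesis
      by (rule square_integrable_imp_integrable_mult[OF that(1)
            square_integrable_bounded_mult(1)[OF that(2) b(1) C]])
  qed
  have "(\<lambda>k. \<integral>x. \<phi> k x * (b i x * d\<phi> k i x) \<partial>M) \<longlonglongrightarrow> (\<integral>x. w x * (b i x * G i x) \<partial>M)" for i
  proof -
    have d\<phi>_i: "\<And>k. square_integrable M (d\<phi> k i)"
      using \<phi>(2) .
    show ?thesis
      by (rule tendsto_integral_weighted_product[OF \<phi>(1) w(1) d\<phi>_i w(2) b lim_\<phi> lim_d\<phi>])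
  qed
  then have "(\<lambda>k. \<Sum>i\<in>UNIV. \<integral>x. \<phi> k x * (b i x * d\<phi> k i x) \<partial>M)
      \<longlonglongrightarrow> (\<Sum>i\<in>UNIV. \<integral>x. w x * (b i x * G i x) \<partial>M)"
    by (intro tendsto_sum)
  moreover have "(\<integral>x. \<phi> k x * (\<Sum>i\<in>UNIV. b i x * d\<phi> k i x) \<partial>M)
      = (\<Sum>i\<in>UNIV. \<integral>x. \<phi> k x * (b i x * d\<phi> k i x) \<partial>M)" for k
    unfolding sum_distrib_left by (intro Bochner_Integration.integral_sum int \<phi>)
  moreover have "(\<integral>x. w x * (\<Sum>i\<in>UNIV. b i x * G i x) \<partial>M)
      = (\<Sum>i\<in>UNIV. \<integral>x. w x * (b i x * G i x) \<partial>M)"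
    unfolding sum_distrib_left by (intro Bochner_Integration.integral_sum int w)
  ultimately have "(\<lambda>k. \<integral>x. \<phi> k x * (\<Sum>i\<in>UNIV. b i x * d\<phi> k i x) \<partial>M)
      \<longlonglongrightarrow> (\<integral>x. w x * (\<Sum>i\<in>UNIV. b i x * G i x) \<partial>M)"
    by simp
  then show ?thesis
    by (rule LIMSEQ_le_const) (use nonneg in auto)
qed

lemma test_fun_drift_nonneg:
  fixes \<Omega> :: "(real^'d) set" and \<psi> :: "real^'d \<Rightarrow> real" and G\<psi> :: "real^'d \<Rightarrow> real^'d"
    and H\<psi> :: "real^'d \<Rightarrow> real^'d^'d" and \<phi> :: "real^'d \<Rightarrow> real"
  assumes \<Omega>: "\<Omega> \<in> sets lborel" "bounded \<Omega>" and \<psi>: "W2inf \<Omega> \<psi> G\<psi> H\<psi>"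
    and lap: "AE x in lborel. x \<in> \<Omega> \<longrightarrow> (\<Sum>i\<in>UNIV. H\<psi> x $ i $ i) \<le> 0"
    and test: "test_fun \<Omega> \<phi>"
  shows "0 \<le> (LINT x:\<Omega>|lborel. \<phi> x * (G\<psi> x \<bullet> grad \<phi> x))"
proof -
  define M where "M = restrict_space lborel \<Omega>"
  have "Linfty \<Omega> (\<lambda>x. H\<psi> x $ i $ i)"
    and weak_div: "weak_partial \<Omega> (\<lambda>x. G\<psi> x $ i) i (\<lambda>x. H\<psi> x $ i $ i)" for i
    using \<psi> unfolding W2inf_def by blast+
  then have H\<psi>: "(\<lambda>x. H\<psi> x $ i $ i) \<in> borel_measurable M" "ae_bounded M (\<lambda>x. H\<psi> x $ i $ i)" for i
    unfolding M_def Linfty_iff_ae_bounded[OF \<Omega>(1)] by blast+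
  have smooth: "smooth \<phi>"
    using test unfolding test_fun_def by blast
  have "0 \<le> (\<integral>x. \<phi> x * (\<Sum>i\<in>UNIV. G\<psi> x $ i * partial \<phi> i x) \<partial>M)"
  proof (rule integral_drift_nonneg_if_div_nonpos[where db = "\<lambda>i x. H\<psi> x $ i $ i"])
    show "(\<integral>x. G\<psi> x $ i * (2 * \<phi> x * partial \<phi> i x) \<partial>M)
        = - (\<integral>x. H\<psi> x $ i $ i * (\<phi> x * \<phi> x) \<partial>M)" for i
    proof -
      have "(LINT x:\<Omega>|lborel. G\<psi> x $ i * partial (\<lambda>x. \<phi> x * \<phi> x) i x)
          = - (LINT x:\<Omega>|lborel. H\<psi> x $ i $ i * (\<phi> x * \<phi> x))"
        using weak_div[of i] test_fun_square[OF test] unfolding weak_partial_def by blast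
      then show ?thesis
        unfolding partial_square[OF smooth] M_def set_integral_eq_restrict_space[OF \<Omega>(1)] .
    qed
    show "AE x in M. (\<Sum>i\<in>UNIV. H\<psi> x $ i $ i) \<le> 0"
      using lap \<Omega>(1) unfolding M_def by (simp add: AE_restrict_space_iff)
  qed (use \<Omega> W2inf_grad_ae_bounded[OF \<Omega>(1) \<psi>] H\<psi> test_fun_ae_bounded[OF test \<Omega>(2)]
        finite_measure_restrict_bounded in \<open>auto simp: M_def\<close>)
  then show ?thesis
    unfolding M_def inner_vec_def inner_real_def grad_def set_integral_eq_restrict_space[OF \<Omega>(1)]
    by simp
qed

lemma H10_drift_nonneg:
  fixes \<Omega> :: "(real^'d) set" and \<psi> :: "real^'d \<Rightarrow> real" and G\<psi> :: "real^'d \<Rightarrow> real^'d"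
    and H\<psi> :: "real^'d \<Rightarrow> real^'d^'d" and w :: "real^'d \<Rightarrow> real" and G :: "real^'d \<Rightarrow> real^'d"
  assumes \<Omega>: "\<Omega> \<in> sets lborel" "bounded \<Omega>" and \<psi>: "W2inf \<Omega> \<psi> G\<psi> H\<psi>"
    and lap: "AE x in lborel. x \<in> \<Omega> \<longrightarrow> (\<Sum>i\<in>UNIV. H\<psi> x $ i $ i) \<le> 0"
    and w: "H10 \<Omega> w G"
  shows "0 \<le> (LINT x:\<Omega>|lborel. w x * (G\<psi> x \<bullet> G x))"
proof -
  define M where "M = restrict_space lborel \<Omega>"
  interpret finite_measure M
    unfolding M_def using \<Omega> by (rule finite_measure_restrict_bounded)
  obtain \<phi> :: "nat \<Rightarrow> real^'d \<Rightarrow> real" where test: "\<And>k. test_fun \<Omega> (\<phi> k)"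
    and lim_\<phi>: "(\<lambda>k. L2norm \<Omega> (\<lambda>x. \<phi> k x - w x)) \<longlonglongrightarrow> 0"
    and lim_grad: "(\<lambda>k. L2norm_vec \<Omega> (\<lambda>x. grad (\<phi> k) x - G x)) \<longlonglongrightarrow> 0"
    using w unfolding H10_def by blast
  have "L2 \<Omega> w" "L2 \<Omega> (\<lambda>x. G x $ i)" for i
    using w unfolding H10_def H1_def L2_vec_def by blast+
  then have w_sq: "square_integrable M w" and G_sq: "square_integrable M (\<lambda>x. G x $ i)" for i
    unfolding M_def L2_iff_square_integrable[OF \<Omega>(1)] by blast+
  note G\<psi> = W2inf_grad_ae_bounded[OF \<Omega>(1) \<psi>, folded M_def]
  note \<phi> = test_fun_ae_bounded[OF test \<Omega>(2), folded M_def]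
  have \<phi>_sq: "square_integrable M (\<phi> k)" and d\<phi>_sq: "square_integrable M (partial (\<phi> k) i)" for k i
    using \<phi> by (simp_all add: square_integrable_ae_bounded)
  have test_nonneg: "0 \<le> (\<integral>x. \<phi> k x * (\<Sum>i\<in>UNIV. G\<psi> x $ i * partial (\<phi> k) i x) \<partial>M)" for k
    using test_fun_drift_nonneg[OF \<Omega> \<psi> lap test]
    unfolding M_def inner_vec_def inner_real_def grad_def set_integral_eq_restrict_space[OF \<Omega>(1)]
    by simp
  have lim_\<phi>_M: "(\<lambda>k. L2_seminorm M (\<lambda>x. \<phi> k x - w x)) \<longlonglongrightarrow> 0"
    using lim_\<phi> unfolding M_def L2norm_eq_L2_seminorm[OF \<Omega>(1)] .
  have lim_d\<phi>_M: "(\<lambda>k. L2_seminorm M (\<lambda>x. partial (\<phi> k) i x - G x $ i)) \<longlonglongrightarrow> 0" for i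
  proof (rule tendsto_sandwich[OF _ _ tendsto_const lim_grad])
    have "L2_seminorm M (\<lambda>x. partial (\<phi> k) i x - G x $ i) \<le> L2norm_vec \<Omega> (\<lambda>x. grad (\<phi> k) x - G x)" for k
      using L2_seminorm_component_le_L2norm_vec[OF \<Omega>(1), of "\<lambda>x. grad (\<phi> k) x - G x" i]
        square_integrable_diff[OF d\<phi>_sq G_sq]
      unfolding M_def by (simp add: grad_def)
    then show "\<forall>\<^sub>F k in sequentially. L2_seminorm M (\<lambda>x. partial (\<phi> k) i x - G x $ i)
        \<le> L2norm_vec \<Omega> (\<lambda>x. grad (\<phi> k) x - G x)"
      by simp
  qed (simp add: L2_seminorm_nonneg)
  have "0 \<le> (\<integral>x. w x * (\<Sum>i\<in>UNIV. G\<psi> x $ i * G x $ i) \<partial>M)"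
    by (rule integral_drift_nonneg_limit[where d\<phi> = "\<lambda>k i. partial (\<phi> k) i"
          and G = "\<lambda>i x. G x $ i" and b = "\<lambda>i x. G\<psi> x $ i",
          OF \<phi>_sq d\<phi>_sq w_sq G_sq G\<psi> lim_\<phi>_M lim_d\<phi>_M test_nonneg])
  then show ?thesis
    unfolding M_def inner_vec_def inner_real_def set_integral_eq_restrict_space[OF \<Omega>(1)] .
qed

theorem lemma7:
  fixes \<Omega> :: "(real^'d) set"
    and \<psi> :: "real^'d \<Rightarrow> real" and G\<psi> :: "real^'d \<Rightarrow> real^'d" and H\<psi> :: "real^'d \<Rightarrow> real^'d^'d"
    and \<tau> :: real and N :: nat
    and u :: "nat \<Rightarrow> real^'d \<Rightarrow> real" and Gu :: "nat \<Rightarrow> real^'d \<Rightarrow> real^'d"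
  assumes dim: "CARD('d) \<le> 3"
    and dom: "bounded_polytopal_domain \<Omega>"
    and lip: "lipschitz_boundary \<Omega>"
    and psi: "W2inf \<Omega> \<psi> G\<psi> H\<psi>"
    and lap: "AE x in lborel. x \<in> \<Omega> \<longrightarrow> (\<Sum>i\<in>UNIV. H\<psi> x $ i $ i) \<le> 0"
    and tau: "\<tau> > 0"
    and u0: "Linfty \<Omega> (u 0)"
    and u0_nonneg: "AE x in lborel. x \<in> \<Omega> \<longrightarrow> u 0 x \<ge> 0"
    and uH: "\<And>n. n \<in> {1..N} \<Longrightarrow> H10 \<Omega> (u n) (Gu n)"
    and scheme: "\<And>n v Gv. n \<in> {1..N} \<Longrightarrow> H10 \<Omega> v Gv \<Longrightarrow>
        (LINT x:\<Omega>|lborel. u n x * v x)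
        + \<tau> * ((LINT x:\<Omega>|lborel. Gu n x \<bullet> Gv x) + (LINT x:\<Omega>|lborel. u n x * (G\<psi> x \<bullet> Gv x)))
        = (LINT x:\<Omega>|lborel. u (n - 1) x * v x)"
  shows "\<forall>n\<in>{1..N}. (1/2) * (L2norm \<Omega> (u n))\<^sup>2
           \<le> (1/2) * (L2norm \<Omega> (u (n - 1)))\<^sup>2 - \<tau> * (L2norm_vec \<Omega> (Gu n))\<^sup>2"
proof
  fix n assume n: "n \<in> {1..N}"
  have \<Omega>: "\<Omega> \<in> sets lborel" "bounded \<Omega>"
    using dom unfolding bounded_polytopal_domain_def by (auto intro: borel_open)
  have un: "H10 \<Omega> (u n) (Gu n)"
    using uH[OF n] .
  then have L2_un: "L2 \<Omega> (u n)"
    unfolding H10_def H1_def by blast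
  have L2_prev: "L2 \<Omega> (u (n - 1))"
  proof (cases "n = 1")
    case True
    then show ?thesis using Linfty_imp_L2[OF \<Omega> u0] by simp
  next
    case False
    with n have "n - 1 \<in> {1..N}" by auto
    then show ?thesis using uH unfolding H10_def H1_def by blast
  qed
  have "0 \<le> \<tau> * (LINT x:\<Omega>|lborel. u n x * (G\<psi> x \<bullet> Gu n x))"
    using tau H10_drift_nonneg[OF \<Omega> psi lap un] by simp
  moreover note scheme[OF n un]
  moreover have "(LINT x:\<Omega>|lborel. u (n - 1) x * u n x)
      \<le> (1/2) * (L2norm \<Omega> (u (n - 1)))\<^sup>2 + (1/2) * (L2norm \<Omega> (u n))\<^sup>2"
    by (rule set_integral_mult_le_L2norm_squares[OF \<Omega>(1) L2_prev L2_un])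
  ultimately show "(1/2) * (L2norm \<Omega> (u n))\<^sup>2
      \<le> (1/2) * (L2norm \<Omega> (u (n - 1)))\<^sup>2 - \<tau> * (L2norm_vec \<Omega> (Gu n))\<^sup>2"
    unfolding L2norm_squared L2norm_vec_squared distrib_left by linarith
qed

end
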